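(* Let $\mathfrak p$ be a prime ideal of $R$ and $\kappa(\mathfrak p)=R_{\mathfrak p}/\mathfrak pR_{\mathfrak p}$. The following are equivalent: (i) $\kappa(\mathfrak p)$ is simple-$\mathcal F$-torsion-free as an $R$-module; (ii) $\kappa(\mathfrak p)$ is simple-$\mathcal F$-divisible as an $R$-module; (iii) $\mathfrak p\in\mathcal F^*$.
   Context: Throughout, $R$ is a commutative Noetherian local ring with maximal ideal $\mathfrak m$, and $\mathcal F$ is a Gabriel topology on $R$: a nonempty set of ideals of $R$ such that (1) if $\mathfrak a\in\mathcal F$ and $\mathfrak a\subseteq\mathfrak b$ then $\mathfrak b\in\mathcal F$; (2) if $\mathfrak a,\mathfrak b\in\mathcal F$ then $\mathfrak a\cap\mathfrak b\in\mathcal F$; (3) if $\mathfrak b$ is an ideal and there is $\mathfrak a\in\mathcal F$ with $(\mathfrak b:r)\in\mathcal F$ for all $r\in\mathfrak a$, then $\mathfrak b\in\mathcal F$. For an $R$-module $X$ and ideal $\mathfrak a$, $X[\mathfrak a]=\{x\in X:\mathfrak a x=0\}$. $X$ is $\mathcal F$-torsion-free if $X[\mathfrak a]=0$ for all $\mathfrak a\in\mathcal F$, and $\mathcal F$-divisible if $\mathfrak aX=X$ for all $\mathfrak a\in\mathcal F$. $M$ is simple-$\mathcal F$-torsion-free if $M\neq0$, $M$ is $\mathcal F$-torsion-free, and for every submodule $0\neq U\subsetneq M$, $M/U$ is not $\mathcal F$-torsion-free; $N$ is simple-$\mathcal F$-divisible if $N\ne0$, $N$ is $\mathcal F$-divisible,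 and no submodule $0\neq V\subsetneq N$ is $\mathcal F$-divisible. $\mathcal F^*$ denotes the set of maximal elements (under inclusion) of $\mathrm{Spec}(R)\setminus\mathcal F$. *)

theory Defs
  imports Main
begin

section \<open>Ideals of a commutative ring (the ring is the whole type 'a)\<close>

definition is_ideal :: "'a::comm_ring_1 set \<Rightarrow> bool" where
  "is_ideal I \<longleftrightarrow> 0 \<in> I \<and> (\<forall>x\<in>I. \<forall>y\<in>I. x + y \<in> I) \<and> (\<forall>r. \<forall>x\<in>I. r * x \<in> I)"

definition ideal_gen :: "'a::comm_ring_1 set \<Rightarrow> 'a set" where
  "ideal_gen S = \<Inter>{I. is_ideal I \<and> S \<subseteq> I}"

definition is_prime_ideal :: "'a::comm_ring_1 set \<Rightarrow> bool" where
  "is_prime_ideal P \<longleftrightarrow> is_ideal P \<and> P \<noteq> UNIV \<and> (\<forall>a b. a * b \<in> P \<longrightarrow> a \<in> P \<or> b \<in> P)"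

definition is_maximal_ideal :: "'a::comm_ring_1 set \<Rightarrow> bool" where
  "is_maximal_ideal M \<longleftrightarrow> is_ideal M \<and> M \<noteq> UNIV \<and>
     (\<forall>J. is_ideal J \<and> M \<subseteq> J \<and> J \<noteq> UNIV \<longrightarrow> J = M)"

definition noetherian_ring :: "'a::comm_ring_1 itself \<Rightarrow> bool" where
  "noetherian_ring _ \<longleftrightarrow> (\<forall>I::'a set. is_ideal I \<longrightarrow> (\<exists>S. finite S \<and> I = ideal_gen S))"

definition local_ring :: "'a::comm_ring_1 itself \<Rightarrow> bool" where
  "local_ring _ \<longleftrightarrow> (\<exists>!M::'a set. is_maximal_ideal M)"

definition colon_ideal :: "'a::comm_ring_1 set \<Rightarrow> 'a \<Rightarrow> 'a set" where
  "colon_ideal b r = {x. x * r \<in> b}"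

definition gabriel_topology :: "'a::comm_ring_1 set set \<Rightarrow> bool" where
  "gabriel_topology F \<longleftrightarrow> F \<noteq> {} \<and> (\<forall>a\<in>F. is_ideal a) \<and>
     (\<forall>a b. a \<in> F \<and> is_ideal b \<and> a \<subseteq> b \<longrightarrow> b \<in> F) \<and>
     (\<forall>a\<in>F. \<forall>b\<in>F. a \<inter> b \<in> F) \<and>
     (\<forall>b. is_ideal b \<and> (\<exists>a\<in>F. \<forall>r\<in>a. colon_ideal b r \<in> F) \<longrightarrow> b \<in> F)"

definition F_star :: "'a::comm_ring_1 set set \<Rightarrow> 'a set set" where
  "F_star F = {P. is_prime_ideal P \<and> P \<notin> F \<and>
     (\<forall>Q. is_prime_ideal Q \<and> Q \<notin> F \<and> P \<subseteq> Q \<longrightarrow> Q = P)}"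

definition is_submodule ::
  "'m set \<Rightarrow> ('m \<Rightarrow> 'm \<Rightarrow> 'm) \<Rightarrow> 'm \<Rightarrow> ('a::comm_ring_1 \<Rightarrow> 'm \<Rightarrow> 'm) \<Rightarrow> 'm set \<Rightarrow> bool" where
  "is_submodule M add z sm U \<longleftrightarrow> U \<subseteq> M \<and> z \<in> U \<and>
     (\<forall>x\<in>U. \<forall>y\<in>U. add x y \<in> U) \<and> (\<forall>r. \<forall>x\<in>U. sm r x \<in> U)"

definition quot_carrier :: "'m set \<Rightarrow> ('m \<Rightarrow> 'm \<Rightarrow> 'm) \<Rightarrow> 'm set \<Rightarrow> 'm set set" where
  "quot_carrier M add U = (\<lambda>x. {add x u | u. u \<in> U}) ` M"

definition quot_add :: "('m \<Rightarrow> 'm \<Rightarrow> 'm) \<Rightarrow> 'm set \<Rightarrow> 'm set \<Rightarrow> 'm set" where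
  "quot_add add C D = {add c d | c d. c \<in> C \<and> d \<in> D}"

definition quot_smult :: "('m \<Rightarrow> 'm \<Rightarrow> 'm) \<Rightarrow> ('a \<Rightarrow> 'm \<Rightarrow> 'm) \<Rightarrow> 'm set \<Rightarrow> 'a \<Rightarrow> 'm set \<Rightarrow> 'm set" where
  "quot_smult add sm U r C = {add (sm r c) u | c u. c \<in> C \<and> u \<in> U}"

definition annih_part :: "'m set \<Rightarrow> 'm \<Rightarrow> ('a \<Rightarrow> 'm \<Rightarrow> 'm) \<Rightarrow> 'a set \<Rightarrow> 'm set" where
  "annih_part M z sm a = {x \<in> M. \<forall>r\<in>a. sm r x = z}"

definition F_torsion_free ::
  "'a::comm_ring_1 set set \<Rightarrow> 'm set \<Rightarrow> 'm \<Rightarrow> ('a \<Rightarrow> 'm \<Rightarrow> 'm) \<Rightarrow> bool" where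
  "F_torsion_free F M z sm \<longleftrightarrow> (\<forall>a\<in>F. annih_part M z sm a = {z})"

definition ideal_times ::
  "'m set \<Rightarrow> ('m \<Rightarrow> 'm \<Rightarrow> 'm) \<Rightarrow> 'm \<Rightarrow> ('a::comm_ring_1 \<Rightarrow> 'm \<Rightarrow> 'm) \<Rightarrow> 'a set \<Rightarrow> 'm set \<Rightarrow> 'm set" where
  "ideal_times M add z sm a X =
     \<Inter>{V. is_submodule M add z sm V \<and> (\<forall>r\<in>a. \<forall>x\<in>X. sm r x \<in> V)}"

definition F_divisible ::
  "'a::comm_ring_1 set set \<Rightarrow> 'm set \<Rightarrow> ('m \<Rightarrow> 'm \<Rightarrow> 'm) \<Rightarrow> 'm \<Rightarrow> ('a \<Rightarrow> 'm \<Rightarrow> 'm) \<Rightarrow> 'm set \<Rightarrow> bool" where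
  "F_divisible F M add z sm X \<longleftrightarrow> (\<forall>a\<in>F. ideal_times M add z sm a X = X)"

definition simple_F_torsion_free ::
  "'a::comm_ring_1 set set \<Rightarrow> 'm set \<Rightarrow> ('m \<Rightarrow> 'm \<Rightarrow> 'm) \<Rightarrow> 'm \<Rightarrow> ('a \<Rightarrow> 'm \<Rightarrow> 'm) \<Rightarrow> bool" where
  "simple_F_torsion_free F M add z sm \<longleftrightarrow> M \<noteq> {z} \<and> F_torsion_free F M z sm \<and>
     (\<forall>U. is_submodule M add z sm U \<and> U \<noteq> {z} \<and> U \<noteq> M \<longrightarrow>
        \<not> F_torsion_free F (quot_carrier M add U) U (quot_smult add sm U))"

definition simple_F_divisible ::
  "'a::comm_ring_1 set set \<Rightarrow> 'm set \<Rightarrow> ('m \<Rightarrow> 'm \<Rightarrow> 'm) \<Rightarrow> 'm \<Rightarrow> ('a \<Rightarrow> 'm \<Rightarrow> 'm) \<Rightarrow> bool" where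
  "simple_F_divisible F N add z sm \<longleftrightarrow> N \<noteq> {z} \<and> F_divisible F N add z sm N \<and>
     (\<forall>V. is_submodule N add z sm V \<and> V \<noteq> {z} \<and> V \<noteq> N \<longrightarrow> \<not> F_divisible F N add z sm V)"

text \<open>Elements are classes of fractions a/s (s not in p) modulo a/s ~ b/t iff a t - b s in p.\<close>
definition kappa_rel :: "'a::comm_ring_1 set \<Rightarrow> (('a \<times> 'a) \<times> ('a \<times> 'a)) set" where
  "kappa_rel P = {((a, s), (b, t)). s \<notin> P \<and> t \<notin> P \<and> a * t - b * s \<in> P}"

definition kappa :: "'a::comm_ring_1 set \<Rightarrow> ('a \<times> 'a) set set" where
  "kappa P = (UNIV \<times> (- P)) // kappa_rel P"

definition kappa_add :: "'a::comm_ring_1 set \<Rightarrow> ('a \<times> 'a) set \<Rightarrow> ('a \<times> 'a) set \<Rightarrow> ('a \<times> 'a) set" where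
  "kappa_add P X Y = (\<Union>(a, s)\<in>X. \<Union>(b, t)\<in>Y. kappa_rel P `` {(a * t + b * s, s * t)})"

definition kappa_zero :: "'a::comm_ring_1 set \<Rightarrow> ('a \<times> 'a) set" where
  "kappa_zero P = kappa_rel P `` {(0, 1)}"

definition kappa_smult :: "'a::comm_ring_1 set \<Rightarrow> 'a \<Rightarrow> ('a \<times> 'a) set \<Rightarrow> ('a \<times> 'a) set" where
  "kappa_smult P r X = (\<Union>(a, s)\<in>X. kappa_rel P `` {(r * a, s)})"

end

theory Submission
  imports Defs
begin

text \<open>
  Elements of R outside P act bijectively on \<kappa>(P) and elements of P act as zero, so
  \<kappa>(P) is F-torsion-free, and likewise F-divisible, exactly when P \<notin> F.
  If Q \<supset> P is a prime outside F, the image of R_Q in \<kappa>(P) is a nonzero proper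
  submodule which is F-divisible and has F-torsion-free quotient; so simplicity in either
  sense forces P \<in> F*.
  Conversely let P \<in> F*. Then every ideal strictly above P lies in F: by Noetherianity a
  counterexample could be chosen maximal, and the Gabriel axiom makes such an ideal prime.
  For a nonzero submodule U and any x, some r \<notin> P moves x into U (\<kappa>(P) is a field).
  Hence the annihilator of x modulo a proper U lies strictly above P, so it is in F and
  \<kappa>(P)/U is not F-torsion-free; and an F-divisible nonzero U is divisible by every
  r \<notin> P, because P + rR \<in> F, which makes U everything.
\<close>

section \<open>Ideals, Noetherian rings and Gabriel topologies\<close>

lemma ideal_zero: "is_ideal I \<Longrightarrow> 0 \<in> I"
  by (simp add: is_ideal_def)

lemma ideal_add: "is_ideal I \<Longrightarrow> x \<in> I \<Longrightarrow> y \<in> I \<Longrightarrow> x + y \<in> I"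
  by (simp add: is_ideal_def)

lemma ideal_mult_left: "is_ideal I \<Longrightarrow> x \<in> I \<Longrightarrow> r * x \<in> I"
  by (simp add: is_ideal_def)

lemma ideal_mult_right: "is_ideal I \<Longrightarrow> x \<in> I \<Longrightarrow> x * r \<in> I"
  by (metis ideal_mult_left mult.commute)

lemma ideal_diff: "is_ideal I \<Longrightarrow> x \<in> I \<Longrightarrow> y \<in> I \<Longrightarrow> x - y \<in> I"
  by (metis ideal_add ideal_mult_left mult_minus1 diff_conv_add_uminus)

lemma ideal_UNIV: "is_ideal UNIV"
  by (simp add: is_ideal_def)

lemma prime_ideal_is_ideal: "is_prime_ideal P \<Longrightarrow> is_ideal P"
  by (simp add: is_prime_ideal_def)

lemma prime_ideal_one_notin: "is_prime_ideal P \<Longrightarrow> 1 \<notin> P"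
  unfolding is_prime_ideal_def by (metis UNIV_eq_I ideal_mult_left mult.right_neutral)

lemma prime_ideal_mult_notin: "is_prime_ideal P \<Longrightarrow> s \<notin> P \<Longrightarrow> t \<notin> P \<Longrightarrow> s * t \<notin> P"
  unfolding is_prime_ideal_def by blast

lemma colon_ideal_is_ideal: "is_ideal b \<Longrightarrow> is_ideal (colon_ideal b r)"
  unfolding is_ideal_def colon_ideal_def by (auto simp: algebra_simps mult.assoc)

definition ideal_plus_principal :: "'a::comm_ring_1 set \<Rightarrow> 'a \<Rightarrow> 'a set" where
  "ideal_plus_principal I r = {c * r + i | c i. i \<in> I}"

lemma ideal_plus_principal_is_ideal:
  assumes I: "is_ideal I" shows "is_ideal (ideal_plus_principal I r)"
  unfolding is_ideal_def ideal_plus_principal_def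
proof (intro conjI ballI allI)
  show "0 \<in> {c * r + i | c i. i \<in> I}"
    using ideal_zero[OF I] by (metis (mono_tags, lifting) add_0 mem_Collect_eq mult_zero_left)
next
  fix x y assume "x \<in> {c * r + i | c i. i \<in> I}" "y \<in> {c * r + i | c i. i \<in> I}"
  then obtain c1 i1 c2 i2 where "x = c1 * r + i1" "y = c2 * r + i2" "i1 \<in> I" "i2 \<in> I" by blast
  then have "x + y = (c1 + c2) * r + (i1 + i2)" "i1 + i2 \<in> I"
    using ideal_add[OF I] by (auto simp: algebra_simps)
  then show "x + y \<in> {c * r + i | c i. i \<in> I}" by blast
next
  fix t x assume "x \<in> {c * r + i | c i. i \<in> I}"
  then obtain c i where "x = c * r + i" "i \<in> I" by blast
  then have "t * x = (t * c) * r + t * i" "t * i \<in> I"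
    using ideal_mult_left[OF I] by (auto simp: algebra_simps)
  then show "t * x \<in> {c * r + i | c i. i \<in> I}" by blast
qed

lemma ideal_plus_principal_supset: "is_ideal I \<Longrightarrow> I \<subseteq> ideal_plus_principal I r"
  unfolding ideal_plus_principal_def by (force intro: exI[of _ 0])

lemma generator_in_ideal_plus_principal: "is_ideal I \<Longrightarrow> r \<in> ideal_plus_principal I r"
  unfolding ideal_plus_principal_def using ideal_zero by (force intro: exI[of _ 1])

lemma noetherian_chain_Union_mem:
  fixes C :: "'a::comm_ring_1 set set"
  assumes noeth: "noetherian_ring TYPE('a)"
    and C: "C \<noteq> {}" "chain\<^sub>\<subseteq> C" "\<forall>B\<in>C. is_ideal B"
  shows "\<Union>C \<in> C"
proof -
  have "is_ideal (\<Union>C)"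
    unfolding is_ideal_def
  proof (intro conjI ballI allI)
    show "0 \<in> \<Union>C" using C ideal_zero by blast
  next
    fix x y assume "x \<in> \<Union>C" "y \<in> \<Union>C"
    then obtain B1 B2 where B: "B1 \<in> C" "B2 \<in> C" "x \<in> B1" "y \<in> B2" by blast
    then have "B1 \<subseteq> B2 \<or> B2 \<subseteq> B1" using C(2) unfolding chain_subset_def by blast
    then show "x + y \<in> \<Union>C" using B C(3) ideal_add by (metis UnionI subsetD)
  next
    fix r x assume "x \<in> \<Union>C"
    then show "r * x \<in> \<Union>C" using C(3) ideal_mult_left by blast
  qed
  then obtain S where S: "finite S" "\<Union>C = ideal_gen S"
    using noeth unfolding noetherian_ring_def by blast
  have "S \<subseteq> \<Union>C" unfolding S(2) ideal_gen_def by blast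
  with S(1) have "\<exists>B\<in>C. S \<subseteq> B"
  proof (induction S rule: finite_induct)
    case empty then show ?case using C(1) by blast
  next
    case (insert x S)
    then obtain B B' where "B \<in> C" "S \<subseteq> B" "B' \<in> C" "x \<in> B'" by blast
    moreover have "B \<subseteq> B' \<or> B' \<subseteq> B" using C(2) calculation unfolding chain_subset_def by blast
    ultimately show ?case by blast
  qed
  then obtain B where B: "B \<in> C" "S \<subseteq> B" by blast
  then have "\<Union>C \<subseteq> B" unfolding S(2) ideal_gen_def using C(3) by blast
  moreover have "B \<subseteq> \<Union>C" using B(1) by blast
  ultimately show ?thesis using B(1) by simp
qed

lemma noetherian_maximal_ideal_in:
  fixes A :: "'a::comm_ring_1 set set"
  assumes noeth: "noetherian_ring TYPE('a)" and b: "b \<in> A" and A: "\<forall>c\<in>A. is_ideal c"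
  shows "\<exists>M\<in>A. b \<subseteq> M \<and> (\<forall>X\<in>A. M \<subseteq> X \<longrightarrow> X = M)"
proof -
  let ?A = "{c \<in> A. b \<subseteq> c}"
  have "\<forall>C\<in>chains ?A. \<exists>U\<in>?A. \<forall>X\<in>C. X \<subseteq> U"
  proof
    fix C assume C: "C \<in> chains ?A"
    show "\<exists>U\<in>?A. \<forall>X\<in>C. X \<subseteq> U"
    proof (cases "C = {}")
      case True then show ?thesis using b by blast
    next
      case False
      have "chain\<^sub>\<subseteq> C" "C \<subseteq> ?A" using C unfolding chains_def by auto
      moreover have "\<forall>B\<in>C. is_ideal B" using \<open>C \<subseteq> ?A\<close> A by blast
      ultimately have "\<Union>C \<in> C" using noetherian_chain_Union_mem[OF noeth False] by blast
      then show ?thesis using \<open>C \<subseteq> ?A\<close> by (intro bexI[of _ "\<Union>C"]) auto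
    qed
  qed
  from Zorn_Lemma2[OF this] obtain M where "M \<in> ?A" "\<forall>X\<in>?A. M \<subseteq> X \<longrightarrow> X = M" by blast
  then show ?thesis by (metis (no_types, lifting) dual_order.trans mem_Collect_eq)
qed

lemma gabriel_topology_upward:
  "gabriel_topology F \<Longrightarrow> a \<in> F \<Longrightarrow> is_ideal b \<Longrightarrow> a \<subseteq> b \<Longrightarrow> b \<in> F"
  unfolding gabriel_topology_def by blast

lemma gabriel_topology_colon:
  assumes "gabriel_topology F" "is_ideal b" "a \<in> F" "\<And>r. r \<in> a \<Longrightarrow> colon_ideal b r \<in> F"
  shows "b \<in> F"
proof -
  have "\<forall>b. is_ideal b \<and> (\<exists>a\<in>F. \<forall>r\<in>a. colon_ideal b r \<in> F) \<longrightarrow> b \<in> F"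
    using assms(1) unfolding gabriel_topology_def by (elim conjE)
  then show ?thesis using assms(2-4) by blast
qed

lemma gabriel_topology_UNIV: "gabriel_topology F \<Longrightarrow> UNIV \<in> F"
proof -
  assume g: "gabriel_topology F"
  then obtain a where "a \<in> F" unfolding gabriel_topology_def by blast
  then show ?thesis using gabriel_topology_upward[OF g _ ideal_UNIV] by blast
qed

lemma gabriel_topology_avoid:
  "gabriel_topology F \<Longrightarrow> is_ideal Q \<Longrightarrow> Q \<notin> F \<Longrightarrow> a \<in> F \<Longrightarrow> \<exists>r\<in>a. r \<notin> Q"
  by (meson gabriel_topology_upward subsetI)

lemma gabriel_topology_maximal_nonmember_prime:
  assumes g: "gabriel_topology F" and M: "is_ideal M" "M \<notin> F"
    and above: "\<And>J. is_ideal J \<Longrightarrow> M \<subset> J \<Longrightarrow> J \<in> F"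
  shows "is_prime_ideal M"
  unfolding is_prime_ideal_def
proof (intro conjI M(1) allI impI)
  show "M \<noteq> UNIV" using M(2) gabriel_topology_UNIV[OF g] by blast
  fix x y assume xy: "x * y \<in> M"
  show "x \<in> M \<or> y \<in> M"
  proof (rule ccontr)
    assume "\<not> (x \<in> M \<or> y \<in> M)"
    then have x: "x \<notin> M" and y: "y \<notin> M" by auto
    have "M \<subset> ideal_plus_principal M x"
      using ideal_plus_principal_supset[OF M(1)] generator_in_ideal_plus_principal[OF M(1)] x by blast
    then have Mx: "ideal_plus_principal M x \<in> F"
      by (rule above[OF ideal_plus_principal_is_ideal[OF M(1)]])
    have "M \<subseteq> colon_ideal M x" "y \<in> colon_ideal M x"
      unfolding colon_ideal_def using ideal_mult_right[OF M(1)] xy by (auto simp: ac_simps)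
    then have "M \<subset> colon_ideal M x" using y by blast
    then have Mcolon: "colon_ideal M x \<in> F"
      by (rule above[OF colon_ideal_is_ideal[OF M(1)]])
    have "colon_ideal M r \<in> F" if r_mem: "r \<in> ideal_plus_principal M x" for r
    proof -
      obtain c m where r: "r = c * x + m" "m \<in> M"
        using r_mem unfolding ideal_plus_principal_def by blast
      have "t * r \<in> M" if "t * x \<in> M" for t
        using ideal_add[OF M(1) ideal_mult_left[OF M(1) that, of c] ideal_mult_left[OF M(1) r(2), of t]]
        by (simp add: r algebra_simps)
      then have "colon_ideal M x \<subseteq> colon_ideal M r" unfolding colon_ideal_def by blast
      then show ?thesis using gabriel_topology_upward[OF g Mcolon colon_ideal_is_ideal[OF M(1)]] by blast
    qed
    then have "M \<in> F" using gabriel_topology_colon[OF g M(1) Mx] by blast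
    then show False using M(2) by blast
  qed
qed

lemma F_star_above_mem:
  fixes F :: "'a::comm_ring_1 set set"
  assumes noeth: "noetherian_ring TYPE('a)" and g: "gabriel_topology F"
    and P: "P \<in> F_star F" and b: "is_ideal b" "P \<subset> b"
  shows "b \<in> F"
proof (rule ccontr)
  let ?A = "{c. is_ideal c \<and> P \<subset> c \<and> c \<notin> F}"
  assume "b \<notin> F"
  then have "b \<in> ?A" using b by blast
  then obtain M where "M \<in> ?A" and max: "\<forall>X\<in>?A. M \<subseteq> X \<longrightarrow> X = M"
    using noetherian_maximal_ideal_in[OF noeth, of b ?A] by blast
  then have M: "is_ideal M" "P \<subset> M" "M \<notin> F" by auto
  have "J \<in> F" if "is_ideal J" "M \<subset> J" for J
    using max that M(2) by blast
  then have "is_prime_ideal M"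
    using gabriel_topology_maximal_nonmember_prime[OF g M(1,3)] by blast
  then show False using P M(2,3) unfolding F_star_def by blast
qed

section \<open>Modules, quotient modules and divisibility\<close>

lemma ideal_times_least:
  "is_submodule M add z sm V \<Longrightarrow> (\<And>r x. r \<in> a \<Longrightarrow> x \<in> X \<Longrightarrow> sm r x \<in> V)
    \<Longrightarrow> ideal_times M add z sm a X \<subseteq> V"
  unfolding ideal_times_def by blast

lemma ideal_times_generator: "r \<in> a \<Longrightarrow> x \<in> X \<Longrightarrow> sm r x \<in> ideal_times M add z sm a X"
  unfolding ideal_times_def by blast

locale rmodule =
  fixes M :: "'m set" and add :: "'m \<Rightarrow> 'm \<Rightarrow> 'm" and z :: 'm
    and sm :: "'a::comm_ring_1 \<Rightarrow> 'm \<Rightarrow> 'm"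
  assumes zero_closed: "z \<in> M"
    and add_closed: "x \<in> M \<Longrightarrow> y \<in> M \<Longrightarrow> add x y \<in> M"
    and smult_closed: "x \<in> M \<Longrightarrow> sm r x \<in> M"
    and add_assoc: "x \<in> M \<Longrightarrow> y \<in> M \<Longrightarrow> w \<in> M \<Longrightarrow> add (add x y) w = add x (add y w)"
    and add_commute: "x \<in> M \<Longrightarrow> y \<in> M \<Longrightarrow> add x y = add y x"
    and add_zero: "x \<in> M \<Longrightarrow> add x z = x"
    and add_neg: "x \<in> M \<Longrightarrow> add x (sm (-1) x) = z"
    and smult_add_right: "x \<in> M \<Longrightarrow> y \<in> M \<Longrightarrow> sm r (add x y) = add (sm r x) (sm r y)"
    and smult_add_left: "x \<in> M \<Longrightarrow> sm (r + s) x = add (sm r x) (sm s x)"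
    and smult_assoc: "x \<in> M \<Longrightarrow> sm (r * s) x = sm r (sm s x)"
    and smult_one: "x \<in> M \<Longrightarrow> sm 1 x = x"
begin

lemma smult_zero_left: "x \<in> M \<Longrightarrow> sm 0 x = z"
  using smult_add_left[of x 1 "-1"] by (simp add: smult_one add_neg)

lemma smult_zero_right: "sm r z = z"
  using smult_assoc[OF zero_closed, of r 0] by (simp add: smult_zero_left zero_closed)

lemma add_neg_cancel: "x \<in> M \<Longrightarrow> w \<in> M \<Longrightarrow> add x (add w (sm (-1) x)) = w"
  by (metis add_assoc add_closed add_commute add_neg add_zero smult_closed)

lemma carrier_submodule: "is_submodule M add z sm M"
  unfolding is_submodule_def by (simp add: zero_closed add_closed smult_closed)

lemma zero_submodule: "is_submodule M add z sm {z}"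
  unfolding is_submodule_def by (simp add: zero_closed add_zero smult_zero_right)

lemma smult_image_submodule:
  assumes V: "is_submodule M add z sm V" shows "is_submodule M add z sm (sm r ` V)"
  unfolding is_submodule_def
proof (intro conjI ballI allI)
  have VM: "V \<subseteq> M" and zV: "z \<in> V" using V unfolding is_submodule_def by auto
  show "sm r ` V \<subseteq> M" using VM smult_closed by blast
  show "z \<in> sm r ` V" using zV smult_zero_right by (metis image_eqI)
  fix x y assume "x \<in> sm r ` V" "y \<in> sm r ` V"
  then obtain v w where "x = sm r v" "y = sm r w" "v \<in> V" "w \<in> V" by blast
  moreover have "add v w \<in> V" using V calculation unfolding is_submodule_def by blast
  ultimately show "add x y \<in> sm r ` V" using VM smult_add_right by (metis image_eqI subsetD)
next
  fix c x assume "x \<in> sm r ` V"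
  then obtain v where v: "x = sm r v" "v \<in> V" by blast
  then have "sm c x = sm r (sm c v)" using V unfolding is_submodule_def
    by (metis mult.commute smult_assoc subsetD)
  moreover have "sm c v \<in> V" using V v unfolding is_submodule_def by blast
  ultimately show "sm c x \<in> sm r ` V" by blast
qed

lemma annihilator_is_ideal:
  assumes U: "is_submodule M add z sm U" and x: "x \<in> M"
  shows "is_ideal {r. sm r x \<in> U}"
  unfolding is_ideal_def
  using U smult_zero_left[OF x] smult_add_left[OF x] smult_assoc[OF x]
  unfolding is_submodule_def by auto

definition coset :: "'m set \<Rightarrow> 'm \<Rightarrow> 'm set" where
  "coset U x = {add x u | u. u \<in> U}"

lemma quot_carrier_eq: "quot_carrier M add U = coset U ` M"
  unfolding quot_carrier_def coset_def ..

lemma coset_self: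
  assumes "is_submodule M add z sm U" "x \<in> M" shows "x \<in> coset U x"
proof -
  have "x = add x z" "z \<in> U" using assms add_zero unfolding is_submodule_def by auto
  then show ?thesis unfolding coset_def by blast
qed

lemma coset_eq_self_iff:
  assumes U: "is_submodule M add z sm U" and x: "x \<in> M"
  shows "coset U x = U \<longleftrightarrow> x \<in> U"
proof
  assume "coset U x = U" then show "x \<in> U" using coset_self[OF U x] by blast
next
  assume xU: "x \<in> U"
  have UM: "U \<subseteq> M" using U unfolding is_submodule_def by blast
  show "coset U x = U"
  proof
    show "coset U x \<subseteq> U" using U xU unfolding coset_def is_submodule_def by blast
    show "U \<subseteq> coset U x"
    proof
      fix w assume w: "w \<in> U"
      have "add w (sm (-1) x) \<in> U" using U xU w unfolding is_submodule_def by blast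
      moreover have "add x (add w (sm (-1) x)) = w" using add_neg_cancel UM xU w by blast
      ultimately show "w \<in> coset U x" unfolding coset_def by (metis (mono_tags, lifting) mem_Collect_eq)
    qed
  qed
qed

lemma quot_smult_coset:
  assumes U: "is_submodule M add z sm U" and x: "x \<in> M"
  shows "quot_smult add sm U r (coset U x) = coset U (sm r x)"
proof
  have UM: "U \<subseteq> M" using U unfolding is_submodule_def by blast
  show "quot_smult add sm U r (coset U x) \<subseteq> coset U (sm r x)"
  proof
    fix w assume "w \<in> quot_smult add sm U r (coset U x)"
    then obtain u1 u where w: "w = add (sm r (add x u1)) u" "u1 \<in> U" "u \<in> U"
      unfolding quot_smult_def coset_def by blast
    then have "w = add (sm r x) (add (sm r u1) u)"
      using UM x by (simp add: smult_add_right add_assoc smult_closed subsetD)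
    moreover have "add (sm r u1) u \<in> U" using U w unfolding is_submodule_def by blast
    ultimately show "w \<in> coset U (sm r x)" unfolding coset_def by blast
  qed
  show "coset U (sm r x) \<subseteq> quot_smult add sm U r (coset U x)"
    using coset_self[OF U x] unfolding quot_smult_def coset_def by blast
qed

lemma F_torsion_free_iff:
  "F_torsion_free F M z sm \<longleftrightarrow> (\<forall>a\<in>F. \<forall>x\<in>M. (\<forall>r\<in>a. sm r x = z) \<longrightarrow> x = z)"
  unfolding F_torsion_free_def annih_part_def using zero_closed smult_zero_right by blast

lemma F_torsion_free_quotient_iff:
  assumes U: "is_submodule M add z sm U"
  shows "F_torsion_free F (quot_carrier M add U) U (quot_smult add sm U)
     \<longleftrightarrow> (\<forall>a\<in>F. \<forall>x\<in>M. (\<forall>r\<in>a. sm r x \<in> U) \<longrightarrow> x \<in> U)"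
proof -
  have zU: "z \<in> U" using U unfolding is_submodule_def by blast
  have annih: "C \<in> annih_part (quot_carrier M add U) U (quot_smult add sm U) a
      \<longleftrightarrow> (\<exists>x\<in>M. C = coset U x \<and> (\<forall>r\<in>a. sm r x \<in> U))" for a C
  proof -
    have "quot_smult add sm U r (coset U x) = U \<longleftrightarrow> sm r x \<in> U" if "x \<in> M" for x r
      using quot_smult_coset[OF U that] coset_eq_self_iff[OF U smult_closed[OF that]] by simp
    then show ?thesis unfolding annih_part_def quot_carrier_eq by blast
  qed
  have U_annih: "U \<in> annih_part (quot_carrier M add U) U (quot_smult add sm U) a" for a
    unfolding annih using coset_eq_self_iff[OF U zero_closed] zU smult_zero_right zero_closed by metis
  have "annih_part (quot_carrier M add U) U (quot_smult add sm U) a = {U}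
      \<longleftrightarrow> (\<forall>x\<in>M. (\<forall>r\<in>a. sm r x \<in> U) \<longrightarrow> coset U x = U)" for a
  proof
    assume "annih_part (quot_carrier M add U) U (quot_smult add sm U) a = {U}"
    then show "\<forall>x\<in>M. (\<forall>r\<in>a. sm r x \<in> U) \<longrightarrow> coset U x = U"
      using annih[of "coset U _" a] by auto
  next
    assume "\<forall>x\<in>M. (\<forall>r\<in>a. sm r x \<in> U) \<longrightarrow> coset U x = U"
    then have "C = U" if "C \<in> annih_part (quot_carrier M add U) U (quot_smult add sm U) a" for C
      using that unfolding annih by auto
    then show "annih_part (quot_carrier M add U) U (quot_smult add sm U) a = {U}"
      using U_annih by blast
  qed
  then show ?thesis
    unfolding F_torsion_free_def using coset_eq_self_iff[OF U] by simp
qed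

lemma F_divisibleI:
  assumes X: "is_submodule M add z sm X" and div: "\<And>a. a \<in> F \<Longrightarrow> \<exists>r\<in>a. X \<subseteq> sm r ` X"
  shows "F_divisible F M add z sm X"
  unfolding F_divisible_def
proof (intro ballI equalityI)
  fix a assume "a \<in> F"
  show "ideal_times M add z sm a X \<subseteq> X"
    using X by (rule ideal_times_least) (use X in \<open>simp add: is_submodule_def\<close>)
  obtain r where r: "r \<in> a" "X \<subseteq> sm r ` X" using div \<open>a \<in> F\<close> by blast
  show "X \<subseteq> ideal_times M add z sm a X"
  proof
    fix x assume "x \<in> X"
    then obtain y where "y \<in> X" "x = sm r y" using r(2) by blast
    then show "x \<in> ideal_times M add z sm a X" using ideal_times_generator[OF r(1)] by simp
  qed
qed

lemma F_divisible_subset_smult_image: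
  assumes V: "is_submodule M add z sm V" and div: "F_divisible F M add z sm V" and a: "a \<in> F"
    and factor: "\<And>s. s \<in> a \<Longrightarrow> \<exists>c. \<forall>x\<in>V. sm s x = sm r (sm c x)"
  shows "V \<subseteq> sm r ` V"
proof -
  have "sm s x \<in> sm r ` V" if s: "s \<in> a" and x: "x \<in> V" for s x
  proof -
    obtain c where "sm s x = sm r (sm c x)" using factor[OF s] x by blast
    moreover have "sm c x \<in> V" using V x unfolding is_submodule_def by blast
    ultimately show ?thesis by (rule image_eqI)
  qed
  then have "ideal_times M add z sm a V \<subseteq> sm r ` V"
    by (rule ideal_times_least[OF smult_image_submodule[OF V]])
  moreover have "ideal_times M add z sm a V = V" using div a unfolding F_divisible_def by blast
  ultimately show ?thesis by simp
qed

end

section \<open>The residue field \<kappa>(P) as an R-module\<close>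

definition kappa_frac :: "'a::comm_ring_1 set \<Rightarrow> 'a \<Rightarrow> 'a \<Rightarrow> ('a \<times> 'a) set" where
  "kappa_frac P a s = kappa_rel P `` {(a, s)}"

lemma kappa_cases:
  assumes "X \<in> kappa P" obtains a s where "s \<notin> P" "X = kappa_frac P a s"
  using assms unfolding kappa_def kappa_frac_def by (auto elim!: quotientE)

lemma kappa_frac_in_kappa: "s \<notin> P \<Longrightarrow> kappa_frac P a s \<in> kappa P"
  unfolding kappa_def kappa_frac_def by (auto intro: quotientI)

lemma kappa_zero_frac: "kappa_zero P = kappa_frac P 0 1"
  by (simp add: kappa_zero_def kappa_frac_def)

context
  fixes P :: "'a::comm_ring_1 set"
  assumes P: "is_prime_ideal P"
begin

lemma kappa_rel_equiv: "equiv (UNIV \<times> - P) (kappa_rel P)"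
proof (rule equivI)
  have I: "is_ideal P" using P by (rule prime_ideal_is_ideal)
  show "refl_on (UNIV \<times> - P) (kappa_rel P)"
    unfolding refl_on_def kappa_rel_def using ideal_zero[OF I] by auto
  show "kappa_rel P \<subseteq> (UNIV \<times> - P) \<times> (UNIV \<times> - P)"
    by (auto simp: kappa_rel_def)
  show "sym (kappa_rel P)"
    unfolding sym_def kappa_rel_def using ideal_diff[OF I ideal_zero[OF I]] by force
  show "trans (kappa_rel P)"
    unfolding trans_def kappa_rel_def
  proof clarsimp
    fix a s b t c u assume "s \<notin> P" "t \<notin> P" "u \<notin> P"
      and "a * t - b * s \<in> P" "b * u - c * t \<in> P"
    then have "u * (a * t - b * s) + s * (b * u - c * t) \<in> P"
      using I by (simp add: ideal_add ideal_mult_left)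
    moreover have "u * (a * t - b * s) + s * (b * u - c * t) = t * (a * u - c * s)"
      by (simp add: algebra_simps)
    ultimately show "a * u - c * s \<in> P"
      using P \<open>t \<notin> P\<close> unfolding is_prime_ideal_def by metis
  qed
qed

lemma kappa_frac_eq_iff:
  assumes "s \<notin> P" "t \<notin> P"
  shows "kappa_frac P a s = kappa_frac P b t \<longleftrightarrow> a * t - b * s \<in> P"
proof -
  have "kappa_frac P a s = kappa_frac P b t \<longleftrightarrow> ((a, s), (b, t)) \<in> kappa_rel P"
    unfolding kappa_frac_def using eq_equiv_class_iff[OF kappa_rel_equiv] assms by auto
  then show ?thesis using assms unfolding kappa_rel_def by auto
qed

lemma kappa_frac_eqI: "s \<notin> P \<Longrightarrow> t \<notin> P \<Longrightarrow> a * t = b * s \<Longrightarrow> kappa_frac P a s = kappa_frac P b t"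
  using kappa_frac_eq_iff ideal_zero[OF prime_ideal_is_ideal[OF P]] by simp

lemma kappa_frac_eq_zero_iff: "s \<notin> P \<Longrightarrow> kappa_frac P a s = kappa_zero P \<longleftrightarrow> a \<in> P"
  using kappa_frac_eq_iff prime_ideal_one_notin[OF P] by (simp add: kappa_zero_frac)

lemma mem_kappa_frac: "(b, t) \<in> kappa_frac P a s \<longleftrightarrow> s \<notin> P \<and> t \<notin> P \<and> a * t - b * s \<in> P"
  unfolding kappa_frac_def kappa_rel_def by auto

lemma kappa_frac_self: "s \<notin> P \<Longrightarrow> (a, s) \<in> kappa_frac P a s"
  unfolding mem_kappa_frac using ideal_zero[OF prime_ideal_is_ideal[OF P]] by simp

lemma kappa_add_frac:
  assumes "s \<notin> P" "t \<notin> P"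
  shows "kappa_add P (kappa_frac P a s) (kappa_frac P b t) = kappa_frac P (a * t + b * s) (s * t)"
proof -
  have I: "is_ideal P" using P by (rule prime_ideal_is_ideal)
  have same: "kappa_frac P (a' * t' + b' * s') (s' * t') = kappa_frac P (a * t + b * s) (s * t)"
    if "(a', s') \<in> kappa_frac P a s" "(b', t') \<in> kappa_frac P b t" for a' s' b' t'
  proof -
    have s't': "s' \<notin> P" "t' \<notin> P" and d: "a * s' - a' * s \<in> P" "b * t' - b' * t \<in> P"
      using that by (auto simp: mem_kappa_frac)
    have "(a * t + b * s) * (s' * t') - (a' * t' + b' * s') * (s * t)
        = t * t' * (a * s' - a' * s) + s * s' * (b * t' - b' * t)"
      by (simp add: algebra_simps)
    also have "\<dots> \<in> P" using I d by (simp add: ideal_add ideal_mult_left)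
    finally show ?thesis
      using kappa_frac_eq_iff prime_ideal_mult_notin[OF P] assms s't' by metis
  qed
  show ?thesis
    unfolding kappa_add_def kappa_frac_def[symmetric]
    using same kappa_frac_self[OF assms(1), of a] kappa_frac_self[OF assms(2), of b] by fast
qed

lemma kappa_smult_frac:
  assumes "s \<notin> P"
  shows "kappa_smult P r (kappa_frac P a s) = kappa_frac P (r * a) s"
proof -
  have same: "kappa_frac P (r * a') s' = kappa_frac P (r * a) s" if "(a', s') \<in> kappa_frac P a s" for a' s'
  proof -
    have s': "s' \<notin> P" and d: "a * s' - a' * s \<in> P" using that by (auto simp: mem_kappa_frac)
    have "(r * a) * s' - (r * a') * s = r * (a * s' - a' * s)" by (simp add: algebra_simps)
    also have "\<dots> \<in> P" using prime_ideal_is_ideal[OF P] d by (rule ideal_mult_left)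
    finally show ?thesis using kappa_frac_eq_iff assms s' by metis
  qed
  show ?thesis
    unfolding kappa_smult_def kappa_frac_def[symmetric]
    using same kappa_frac_self[OF assms, of a] by fast
qed

lemma kappa_rmodule: "rmodule (kappa P) (kappa_add P) (kappa_zero P) (kappa_smult P)"
  by (unfold_locales; (elim kappa_cases)?;
      simp add: kappa_add_frac kappa_smult_frac kappa_zero_frac kappa_frac_in_kappa
        prime_ideal_mult_notin[OF P] prime_ideal_one_notin[OF P];
      (rule kappa_frac_eqI)?; simp add: prime_ideal_mult_notin[OF P] prime_ideal_one_notin[OF P] algebra_simps)

interpretation kappa: rmodule "kappa P" "kappa_add P" "kappa_zero P" "kappa_smult P"
  by (rule kappa_rmodule)

lemma kappa_smult_prime_elem:
  assumes "r \<in> P" "X \<in> kappa P" shows "kappa_smult P r X = kappa_zero P"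
proof -
  obtain a s where "s \<notin> P" "X = kappa_frac P a s" using assms(2) by (rule kappa_cases)
  moreover have "r * a \<in> P" using prime_ideal_is_ideal[OF P] assms(1) by (rule ideal_mult_right)
  ultimately show ?thesis by (simp add: kappa_smult_frac kappa_frac_eq_zero_iff)
qed

lemma kappa_smult_cancel:
  assumes "r \<notin> P" "X \<in> kappa P" "Y \<in> kappa P" "kappa_smult P r X = kappa_smult P r Y"
  shows "X = Y"
proof -
  obtain a s b t where st: "s \<notin> P" "t \<notin> P" and XY: "X = kappa_frac P a s" "Y = kappa_frac P b t"
    using assms(2,3) by (auto elim!: kappa_cases)
  have "r * (a * t - b * s) \<in> P"
    using assms(4) st by (simp add: XY kappa_smult_frac kappa_frac_eq_iff algebra_simps)
  then have "a * t - b * s \<in> P" using P assms(1) unfolding is_prime_ideal_def by blast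
  then show ?thesis using st by (simp add: XY kappa_frac_eq_iff)
qed

lemma kappa_smult_surj: "r \<notin> P \<Longrightarrow> kappa P \<subseteq> kappa_smult P r ` kappa P"
proof
  fix X assume r: "r \<notin> P" and "X \<in> kappa P"
  then obtain a s where s: "s \<notin> P" and X: "X = kappa_frac P a s" by (auto elim: kappa_cases)
  have sr: "s * r \<notin> P" using prime_ideal_mult_notin[OF P s r] .
  have "kappa_smult P r (kappa_frac P a (s * r)) = kappa_frac P (r * a) (s * r)"
    using sr by (rule kappa_smult_frac)
  also have "\<dots> = X" unfolding X using sr s by (rule kappa_frac_eqI) (simp add: algebra_simps)
  finally have "kappa_smult P r (kappa_frac P a (s * r)) = X" .
  then show "X \<in> kappa_smult P r ` kappa P"
    using kappa_frac_in_kappa[OF sr] by blast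
qed

lemma kappa_nontrivial: "kappa P \<noteq> {kappa_zero P}"
  using kappa_frac_in_kappa[of 1 P 1] kappa_frac_eq_zero_iff[of 1 1] prime_ideal_one_notin[OF P] by auto

lemma kappa_smult_ratio:
  assumes x: "x \<in> kappa P" and y: "y \<in> kappa P" "y \<noteq> kappa_zero P"
  shows "\<exists>r c. r \<notin> P \<and> kappa_smult P r x = kappa_smult P c y"
proof -
  obtain u s v t where st: "s \<notin> P" "t \<notin> P" and xy: "x = kappa_frac P u s" "y = kappa_frac P v t"
    using x y(1) by (auto elim!: kappa_cases)
  have "v \<notin> P" using y(2) st(2) kappa_frac_eq_zero_iff xy(2) by blast
  moreover have "kappa_frac P (s * v * u) s = kappa_frac P (u * t * v) t"
    using st by (rule kappa_frac_eqI) (simp add: algebra_simps)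
  then have "kappa_smult P (s * v) x = kappa_smult P (u * t) y"
    using st by (simp add: xy kappa_smult_frac)
  ultimately show ?thesis using prime_ideal_mult_notin[OF P st(1)] by blast
qed

lemma kappa_F_torsion_free_iff:
  assumes g: "gabriel_topology F"
  shows "F_torsion_free F (kappa P) (kappa_zero P) (kappa_smult P) \<longleftrightarrow> P \<notin> F"
proof
  assume tf: "F_torsion_free F (kappa P) (kappa_zero P) (kappa_smult P)"
  show "P \<notin> F"
  proof
    assume "P \<in> F"
    then have "\<forall>x\<in>kappa P. x = kappa_zero P"
      using tf kappa_smult_prime_elem unfolding kappa.F_torsion_free_iff by blast
    then show False using kappa_nontrivial kappa.zero_closed by blast
  qed
next
  assume PF: "P \<notin> F"
  show "F_torsion_free F (kappa P) (kappa_zero P) (kappa_smult P)"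
    unfolding kappa.F_torsion_free_iff
  proof (intro ballI impI)
    fix a x assume a: "a \<in> F" and x: "x \<in> kappa P"
      and ann: "\<forall>r\<in>a. kappa_smult P r x = kappa_zero P"
    obtain r where r: "r \<in> a" "r \<notin> P"
      using gabriel_topology_avoid[OF g prime_ideal_is_ideal[OF P] PF a] by blast
    have "kappa_smult P r x = kappa_smult P r (kappa_zero P)"
      using ann r(1) kappa.smult_zero_right by simp
    then show "x = kappa_zero P" by (rule kappa_smult_cancel[OF r(2) x kappa.zero_closed])
  qed
qed

lemma kappa_F_divisible_iff:
  assumes g: "gabriel_topology F"
  shows "F_divisible F (kappa P) (kappa_add P) (kappa_zero P) (kappa_smult P) (kappa P) \<longleftrightarrow> P \<notin> F"
proof
  assume div: "F_divisible F (kappa P) (kappa_add P) (kappa_zero P) (kappa_smult P) (kappa P)"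
  show "P \<notin> F"
  proof
    assume "P \<in> F"
    have "ideal_times (kappa P) (kappa_add P) (kappa_zero P) (kappa_smult P) P (kappa P)
        \<subseteq> {kappa_zero P}"
      using kappa.zero_submodule by (rule ideal_times_least) (simp add: kappa_smult_prime_elem)
    then show False
      using div \<open>P \<in> F\<close> kappa_nontrivial kappa.zero_closed unfolding F_divisible_def by blast
  qed
next
  assume PF: "P \<notin> F"
  show "F_divisible F (kappa P) (kappa_add P) (kappa_zero P) (kappa_smult P) (kappa P)"
    using kappa.carrier_submodule
  proof (rule kappa.F_divisibleI)
    fix a assume "a \<in> F"
    then obtain r where "r \<in> a" "r \<notin> P"
      using gabriel_topology_avoid[OF g prime_ideal_is_ideal[OF P] PF] by blast
    then show "\<exists>r\<in>a. kappa P \<subseteq> kappa_smult P r ` kappa P" using kappa_smult_surj by blast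
  qed
qed

text \<open>The image of the localisation R_Q in \<kappa>(P) = R_P / P R_P.\<close>

definition kappa_loc :: "'a set \<Rightarrow> ('a \<times> 'a) set set" where
  "kappa_loc Q = {kappa_frac P a s | a s. s \<notin> Q}"

context
  fixes Q :: "'a set"
  assumes Q: "is_prime_ideal Q" and PQ: "P \<subseteq> Q"
begin

lemma kappa_loc_submodule:
  "is_submodule (kappa P) (kappa_add P) (kappa_zero P) (kappa_smult P) (kappa_loc Q)"
  unfolding is_submodule_def
proof (intro conjI ballI allI)
  show "kappa_loc Q \<subseteq> kappa P" unfolding kappa_loc_def using PQ kappa_frac_in_kappa by blast
  show "kappa_zero P \<in> kappa_loc Q"
    unfolding kappa_loc_def kappa_zero_frac using prime_ideal_one_notin[OF Q] by blast
next
  fix X Y assume "X \<in> kappa_loc Q" "Y \<in> kappa_loc Q"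
  then obtain a s b t where st: "s \<notin> Q" "t \<notin> Q" and XY: "X = kappa_frac P a s" "Y = kappa_frac P b t"
    unfolding kappa_loc_def by blast
  moreover have "s \<notin> P" "t \<notin> P" using st PQ by auto
  ultimately have "kappa_add P X Y = kappa_frac P (a * t + b * s) (s * t)" by (simp add: kappa_add_frac)
  moreover have "s * t \<notin> Q" using prime_ideal_mult_notin[OF Q st] .
  ultimately show "kappa_add P X Y \<in> kappa_loc Q" unfolding kappa_loc_def by blast
next
  fix r X assume "X \<in> kappa_loc Q"
  then obtain a s where s: "s \<notin> Q" and X: "X = kappa_frac P a s" unfolding kappa_loc_def by blast
  moreover have "s \<notin> P" using s PQ by auto
  ultimately have "kappa_smult P r X = kappa_frac P (r * a) s" by (simp add: kappa_smult_frac)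
  then show "kappa_smult P r X \<in> kappa_loc Q" unfolding kappa_loc_def using s by blast
qed

lemma kappa_loc_nontrivial: "kappa_loc Q \<noteq> {kappa_zero P}"
proof -
  have "kappa_frac P 1 1 \<in> kappa_loc Q" unfolding kappa_loc_def using prime_ideal_one_notin[OF Q] by blast
  moreover have "kappa_frac P 1 1 \<noteq> kappa_zero P" using kappa_frac_eq_zero_iff prime_ideal_one_notin[OF P] by simp
  ultimately show ?thesis by blast
qed

lemma kappa_loc_proper:
  assumes "Q \<noteq> P" shows "kappa_loc Q \<noteq> kappa P"
proof -
  obtain t where t: "t \<in> Q" "t \<notin> P" using assms PQ by blast
  have "kappa_frac P 1 t \<notin> kappa_loc Q"
  proof
    assume "kappa_frac P 1 t \<in> kappa_loc Q"
    then obtain a s where s: "s \<notin> Q" "kappa_frac P 1 t = kappa_frac P a s" unfolding kappa_loc_def by blast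
    then have "1 * s - a * t \<in> Q" using kappa_frac_eq_iff t PQ by blast
    moreover have "a * t \<in> Q" using prime_ideal_is_ideal[OF Q] t(1) by (rule ideal_mult_left)
    ultimately have "(1 * s - a * t) + a * t \<in> Q" by (rule ideal_add[OF prime_ideal_is_ideal[OF Q]])
    then show False using s by simp
  qed
  then show ?thesis using kappa_frac_in_kappa[OF t(2)] by blast
qed

lemma kappa_loc_smult_cancel:
  assumes r: "r \<notin> Q" and X: "X \<in> kappa P" and rX: "kappa_smult P r X \<in> kappa_loc Q"
  shows "X \<in> kappa_loc Q"
proof -
  obtain a s where s: "s \<notin> P" and Xe: "X = kappa_frac P a s" using X by (rule kappa_cases)
  obtain b u where u: "u \<notin> Q" and eq: "kappa_frac P (r * a) s = kappa_frac P b u"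
    using rX s by (auto simp: Xe kappa_smult_frac kappa_loc_def)
  have uP: "u \<notin> P" "r \<notin> P" using u r PQ by auto
  have "r * a * u - b * s \<in> P" using eq s uP(1) kappa_frac_eq_iff by blast
  then have "kappa_frac P a s = kappa_frac P b (u * r)"
    using kappa_frac_eq_iff[OF s prime_ideal_mult_notin[OF P uP]] by (simp add: algebra_simps)
  moreover have "u * r \<notin> Q" using prime_ideal_mult_notin[OF Q u r] .
  ultimately show ?thesis unfolding Xe kappa_loc_def by blast
qed

lemma kappa_loc_smult_surj:
  assumes r: "r \<notin> Q" shows "kappa_loc Q \<subseteq> kappa_smult P r ` kappa_loc Q"
proof
  fix X assume "X \<in> kappa_loc Q"
  then obtain a s where s: "s \<notin> Q" and Xe: "X = kappa_frac P a s" unfolding kappa_loc_def by blast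
  have sr: "s * r \<notin> Q" using prime_ideal_mult_notin[OF Q s r] .
  then have srP: "s * r \<notin> P" and sP: "s \<notin> P" using s PQ by auto
  have "kappa_smult P r (kappa_frac P a (s * r)) = kappa_frac P (r * a) (s * r)"
    using srP by (rule kappa_smult_frac)
  also have "\<dots> = X" unfolding Xe using srP sP by (rule kappa_frac_eqI) (simp add: algebra_simps)
  finally show "X \<in> kappa_smult P r ` kappa_loc Q"
    using sr unfolding kappa_loc_def by blast
qed

lemma kappa_loc_F_divisible:
  assumes g: "gabriel_topology F" and QF: "Q \<notin> F"
  shows "F_divisible F (kappa P) (kappa_add P) (kappa_zero P) (kappa_smult P) (kappa_loc Q)"
  using kappa_loc_submodule
proof (rule kappa.F_divisibleI)
  fix a assume "a \<in> F"
  then obtain r where "r \<in> a" "r \<notin> Q"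
    using gabriel_topology_avoid[OF g prime_ideal_is_ideal[OF Q] QF] by blast
  then show "\<exists>r\<in>a. kappa_loc Q \<subseteq> kappa_smult P r ` kappa_loc Q" using kappa_loc_smult_surj by blast
qed

lemma kappa_loc_quotient_F_torsion_free:
  assumes g: "gabriel_topology F" and QF: "Q \<notin> F"
  shows "F_torsion_free F (quot_carrier (kappa P) (kappa_add P) (kappa_loc Q)) (kappa_loc Q)
           (quot_smult (kappa_add P) (kappa_smult P) (kappa_loc Q))"
  unfolding kappa.F_torsion_free_quotient_iff[OF kappa_loc_submodule]
proof (intro ballI impI)
  fix a x assume a: "a \<in> F" and x: "x \<in> kappa P" and ann: "\<forall>r\<in>a. kappa_smult P r x \<in> kappa_loc Q"
  obtain r where "r \<in> a" "r \<notin> Q"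
    using gabriel_topology_avoid[OF g prime_ideal_is_ideal[OF Q] QF a] by blast
  then show "x \<in> kappa_loc Q" using kappa_loc_smult_cancel x ann by blast
qed

end

section \<open>Simplicity of \<kappa>(P)\<close>

lemma simple_F_torsion_free_kappa_imp_F_star:
  assumes g: "gabriel_topology F"
    and simple: "simple_F_torsion_free F (kappa P) (kappa_add P) (kappa_zero P) (kappa_smult P)"
  shows "P \<in> F_star F"
proof -
  have "P \<notin> F" using simple kappa_F_torsion_free_iff[OF g] unfolding simple_F_torsion_free_def by blast
  moreover have "Q = P" if Q: "is_prime_ideal Q" "Q \<notin> F" "P \<subseteq> Q" for Q
    using simple kappa_loc_submodule[OF Q(1,3)] kappa_loc_nontrivial[OF Q(1,3)]
      kappa_loc_proper[OF Q(1,3)] kappa_loc_quotient_F_torsion_free[OF Q(1,3) g Q(2)]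
    unfolding simple_F_torsion_free_def by blast
  ultimately show ?thesis using P unfolding F_star_def by blast
qed

lemma simple_F_divisible_kappa_imp_F_star:
  assumes g: "gabriel_topology F"
    and simple: "simple_F_divisible F (kappa P) (kappa_add P) (kappa_zero P) (kappa_smult P)"
  shows "P \<in> F_star F"
proof -
  have "P \<notin> F" using simple kappa_F_divisible_iff[OF g] unfolding simple_F_divisible_def by blast
  moreover have "Q = P" if Q: "is_prime_ideal Q" "Q \<notin> F" "P \<subseteq> Q" for Q
    using simple kappa_loc_submodule[OF Q(1,3)] kappa_loc_nontrivial[OF Q(1,3)]
      kappa_loc_proper[OF Q(1,3)] kappa_loc_F_divisible[OF Q(1,3) g Q(2)]
    unfolding simple_F_divisible_def by blast
  ultimately show ?thesis using P unfolding F_star_def by blast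
qed

lemma F_star_imp_simple_F_torsion_free_kappa:
  assumes noeth: "noetherian_ring TYPE('a)" and g: "gabriel_topology F" and PF: "P \<in> F_star F"
  shows "simple_F_torsion_free F (kappa P) (kappa_add P) (kappa_zero P) (kappa_smult P)"
  unfolding simple_F_torsion_free_def
proof (intro conjI allI impI kappa_nontrivial)
  show "F_torsion_free F (kappa P) (kappa_zero P) (kappa_smult P)"
    using PF kappa_F_torsion_free_iff[OF g] unfolding F_star_def by blast
  fix U assume "is_submodule (kappa P) (kappa_add P) (kappa_zero P) (kappa_smult P) U
    \<and> U \<noteq> {kappa_zero P} \<and> U \<noteq> kappa P"
  then have U: "is_submodule (kappa P) (kappa_add P) (kappa_zero P) (kappa_smult P) U"
    and "U \<noteq> {kappa_zero P}" "U \<noteq> kappa P" by auto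
  moreover have "U \<subseteq> kappa P" "kappa_zero P \<in> U" using U unfolding is_submodule_def by auto
  ultimately obtain x y where x: "x \<in> kappa P" "x \<notin> U" and y: "y \<in> U" "y \<noteq> kappa_zero P"
    by blast
  let ?b = "{r. kappa_smult P r x \<in> U}"
  obtain r c where r: "r \<notin> P" "kappa_smult P r x = kappa_smult P c y"
    using kappa_smult_ratio x(1) y \<open>U \<subseteq> kappa P\<close> by blast
  have "r \<in> ?b" using r(2) y(1) U unfolding is_submodule_def by auto
  moreover have "P \<subseteq> ?b" using kappa_smult_prime_elem[OF _ x(1)] \<open>kappa_zero P \<in> U\<close> by auto
  ultimately have "P \<subset> ?b" using r(1) by blast
  then have "?b \<in> F"
    using F_star_above_mem[OF noeth g PF kappa.annihilator_is_ideal[OF U x(1)]] by blast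
  show "\<not> F_torsion_free F (quot_carrier (kappa P) (kappa_add P) U) U
      (quot_smult (kappa_add P) (kappa_smult P) U)"
  proof
    assume "F_torsion_free F (quot_carrier (kappa P) (kappa_add P) U) U
      (quot_smult (kappa_add P) (kappa_smult P) U)"
    then have "\<forall>a\<in>F. \<forall>x\<in>kappa P. (\<forall>r\<in>a. kappa_smult P r x \<in> U) \<longrightarrow> x \<in> U"
      unfolding kappa.F_torsion_free_quotient_iff[OF U] .
    from this[rule_format, OF \<open>?b \<in> F\<close> x(1)] show False using x(2) by simp
  qed
qed

lemma kappa_submodule_eq_if_divisible:
  assumes V: "is_submodule (kappa P) (kappa_add P) (kappa_zero P) (kappa_smult P) V"
    and nonzero: "V \<noteq> {kappa_zero P}"
    and div: "\<And>r. r \<notin> P \<Longrightarrow> V \<subseteq> kappa_smult P r ` V"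
  shows "V = kappa P"
proof
  have VK: "V \<subseteq> kappa P" and zV: "kappa_zero P \<in> V" using V unfolding is_submodule_def by auto
  then show "V \<subseteq> kappa P" by blast
  obtain y where y: "y \<in> V" "y \<noteq> kappa_zero P" using nonzero zV by blast
  show "kappa P \<subseteq> V"
  proof
    fix x assume x: "x \<in> kappa P"
    obtain r c where r: "r \<notin> P" "kappa_smult P r x = kappa_smult P c y"
      using kappa_smult_ratio x y VK by blast
    have "kappa_smult P c y \<in> V" using V y(1) unfolding is_submodule_def by blast
    then obtain w where w: "w \<in> V" "kappa_smult P c y = kappa_smult P r w" using div[OF r(1)] by blast
    have "x = w" using kappa_smult_cancel[OF r(1) x] w VK r(2) by auto
    then show "x \<in> V" using w(1) by blast
  qed
qed

lemma F_star_F_divisible_smult_surj: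
  assumes noeth: "noetherian_ring TYPE('a)" and g: "gabriel_topology F" and PF: "P \<in> F_star F"
    and V: "is_submodule (kappa P) (kappa_add P) (kappa_zero P) (kappa_smult P) V"
    and div: "F_divisible F (kappa P) (kappa_add P) (kappa_zero P) (kappa_smult P) V"
    and r: "r \<notin> P"
  shows "V \<subseteq> kappa_smult P r ` V"
proof -
  have I: "is_ideal P" using P by (rule prime_ideal_is_ideal)
  have "P \<subset> ideal_plus_principal P r"
    using ideal_plus_principal_supset[OF I] generator_in_ideal_plus_principal[OF I] r by blast
  then have a: "ideal_plus_principal P r \<in> F"
    using F_star_above_mem[OF noeth g PF ideal_plus_principal_is_ideal[OF I]] by blast
  have VK: "V \<subseteq> kappa P" using V unfolding is_submodule_def by blast
  show ?thesis
    using V div a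
  proof (rule kappa.F_divisible_subset_smult_image)
    fix s assume "s \<in> ideal_plus_principal P r"
    then obtain c p where s: "s = c * r + p" "p \<in> P" unfolding ideal_plus_principal_def by blast
    have "kappa_smult P s x = kappa_smult P r (kappa_smult P c x)" if "x \<in> V" for x
    proof -
      have x: "x \<in> kappa P" using that VK by blast
      have "kappa_smult P s x = kappa_add P (kappa_smult P (r * c) x) (kappa_smult P p x)"
        using kappa.smult_add_left[OF x] by (simp add: s mult.commute)
      also have "\<dots> = kappa_smult P r (kappa_smult P c x)"
        using x by (simp add: kappa_smult_prime_elem[OF s(2) x] kappa.smult_assoc
          kappa.add_zero kappa.smult_closed)
      finally show ?thesis .
    qed
    then show "\<exists>c. \<forall>x\<in>V. kappa_smult P s x = kappa_smult P r (kappa_smult P c x)" by blast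
  qed
qed

lemma F_star_imp_simple_F_divisible_kappa:
  assumes noeth: "noetherian_ring TYPE('a)" and g: "gabriel_topology F" and PF: "P \<in> F_star F"
  shows "simple_F_divisible F (kappa P) (kappa_add P) (kappa_zero P) (kappa_smult P)"
  unfolding simple_F_divisible_def
proof (intro conjI allI impI kappa_nontrivial)
  show "F_divisible F (kappa P) (kappa_add P) (kappa_zero P) (kappa_smult P) (kappa P)"
    using PF kappa_F_divisible_iff[OF g] unfolding F_star_def by blast
  fix V assume "is_submodule (kappa P) (kappa_add P) (kappa_zero P) (kappa_smult P) V
    \<and> V \<noteq> {kappa_zero P} \<and> V \<noteq> kappa P"
  then have V: "is_submodule (kappa P) (kappa_add P) (kappa_zero P) (kappa_smult P) V"
    and "V \<noteq> {kappa_zero P}" "V \<noteq> kappa P" by auto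
  then show "\<not> F_divisible F (kappa P) (kappa_add P) (kappa_zero P) (kappa_smult P) V"
    using kappa_submodule_eq_if_divisible F_star_F_divisible_smult_surj[OF noeth g PF V] by blast
qed

end

theorem theorem1p4:
  fixes F :: "'a::comm_ring_1 set set" and P :: "'a set"
  assumes "noetherian_ring TYPE('a)"
    and "local_ring TYPE('a)"
    and "gabriel_topology F"
    and "is_prime_ideal P"
  shows "(simple_F_torsion_free F (kappa P) (kappa_add P) (kappa_zero P) (kappa_smult P)
            \<longleftrightarrow> simple_F_divisible F (kappa P) (kappa_add P) (kappa_zero P) (kappa_smult P))
       \<and> (simple_F_divisible F (kappa P) (kappa_add P) (kappa_zero P) (kappa_smult P)
            \<longleftrightarrow> P \<in> F_star F)"
  using simple_F_torsion_free_kappa_imp_F_star[OF assms(4,3)]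
    F_star_imp_simple_F_torsion_free_kappa[OF assms(4,1,3)]
    simple_F_divisible_kappa_imp_F_star[OF assms(4,3)]
    F_star_imp_simple_F_divisible_kappa[OF assms(4,1,3)]
  by blast

end
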